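(* For every integer $r\ge0$, $$\sum_{i=1}^\infty(a_{i+1}-a_i)\,i^r\le 2\,r!,$$ where $a_i=(1-2^{1-2i})\zeta(2i)$ and $\zeta$ is the Riemann zeta function.
   Context: $\zeta$ denotes the Riemann zeta function. *)

theory Defs
  imports "HOL-Analysis.Analysis"
begin

definition zeta :: "real \<Rightarrow> real" where
  "zeta s = (\<Sum>n. 1 / (real (Suc n)) powr s)"

definition a_seq :: "nat \<Rightarrow> real" where
  "a_seq i = (1 - 2 powr (1 - 2 * real i)) * zeta (2 * real i)"

end

theory Submission
  imports Defs
begin

text \<open>The value \<open>(1 - 2 ^ (1 - 2k)) \<zeta>(2k)\<close> is the alternating series
  \<open>\<Sum>n \<ge> 1. (-1) ^ (n + 1) / n ^ 2k\<close>, hence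
  \<open>a (k + 1) - a k = \<Sum>n \<ge> 2. (-1) ^ n (1 / n ^ 2k - 1 / n ^ (2k + 2))\<close>.
  For \<open>k \<ge> 1\<close> these terms decrease in \<open>n\<close>, so by the Leibniz criterion
  \<open>0 \<le> a (k + 1) - a k \<le> 1 / 4 ^ k - 1 / 4 ^ (k + 1) = 3 / 4 ^ (k + 1)\<close>.
  Together with \<open>i ^ r \<le> r! e ^ i\<close>, the series is dominated by
  \<open>(3/4) r! \<Sum>i \<ge> 1. q ^ i = (3/4) r! q / (1 - q)\<close> with \<open>q = e/4 < 0.68\<close>, which is below \<open>2 r!\<close>.\<close>

lemma zeta_nat_sums:
  assumes "m \<ge> 2"
  shows "(\<lambda>n. 1 / real (Suc n) ^ m) sums zeta (real m)"
proof -
  have "summable (\<lambda>n. inverse (real n ^ m))"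
    using inverse_power_summable assms by blast
  then have "summable (\<lambda>n. 1 / real (Suc n) ^ m)"
    using summable_Suc_iff [of "\<lambda>n. inverse (real n ^ m)"] by (simp add: divide_inverse)
  moreover have "1 / real (Suc n) powr real m = 1 / real (Suc n) ^ m" for n
    by (simp add: powr_realpow)
  ultimately show ?thesis
    unfolding zeta_def by (simp add: summable_sums)
qed

lemma alternating_zeta_sums:
  assumes "m \<ge> 2"
  shows "(\<lambda>n. (-1) ^ n / real (Suc n) ^ m) sums ((1 - 2 powr (1 - real m)) * zeta (real m))"
proof -
  define f where "f n = 1 / real (Suc n) ^ m" for n
  define Z where "Z = zeta (real m)"
  have f_sums: "f sums Z"
    unfolding f_def Z_def using zeta_nat_sums [OF assms] .
  define g where "g n = (-1) ^ n * f n" for n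
  have "summable g"
    by (rule summable_comparison_test [OF _ sums_summable [OF f_sums]]) (simp add: g_def f_def)
  then have "(\<lambda>n. f (2 * n) - f (2 * n + 1)) sums suminf g"
    using sums_group [OF summable_sums, of g 2] by (simp add: g_def mult.commute)
  moreover have "(\<lambda>n. f (2 * n) - f (2 * n + 1)) sums (Z - 2 * (Z / 2 ^ m))"
  proof -
    have pairs: "(\<lambda>n. f (2 * n) + f (2 * n + 1)) sums Z"
      using sums_group [OF f_sums, of 2] by (simp add: mult.commute)
    have "f (2 * n + 1) = f n / 2 ^ m" for n
    proof -
      have "real (Suc (2 * n + 1)) = 2 * real (Suc n)" by simp
      then show ?thesis unfolding f_def by (simp only: power_mult_distrib) simp
    qed
    then have "(\<lambda>n. 2 * f (2 * n + 1)) sums (2 * (Z / 2 ^ m))"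
      using sums_mult [OF sums_divide [OF f_sums]] by simp
    from sums_diff [OF pairs this] show ?thesis by simp
  qed
  moreover have "2 powr (1 - real m) = 2 / 2 ^ m"
    by (simp add: powr_diff powr_realpow)
  ultimately have "g sums ((1 - 2 powr (1 - real m)) * Z)"
    using \<open>summable g\<close> sums_unique2 summable_sums by (fastforce simp: algebra_simps)
  then show ?thesis
    by (simp add: g_def [abs_def] f_def Z_def)
qed

lemma a_seq_alternating_sums:
  assumes "k \<ge> 1"
  shows "(\<lambda>n. (-1) ^ n / real (Suc n) ^ (2 * k)) sums a_seq k"
  using alternating_zeta_sums [of "2 * k"] assms by (simp add: a_seq_def)

lemma power_ratio_antimono:
  fixes u v :: real
  assumes "k \<ge> 1" "2 \<le> u" "u \<le> v"
  shows "(v - 1) / v ^ Suc k \<le> (u - 1) / u ^ Suc k"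
proof -
  obtain j where k: "Suc k = j + 2"
    using assms(1) by (cases k) auto
  have "(v - 1) * u\<^sup>2 \<le> (u - 1) * v\<^sup>2"
  proof -
    have "(u - 1) * v\<^sup>2 - (v - 1) * u\<^sup>2 = (v - u) * ((u - 1) * (v - 1) - 1)"
      by (simp add: power2_eq_square algebra_simps)
    moreover have "(u - 1) * (v - 1) \<ge> 1"
      using assms mult_mono [of 1 "u - 1" 1 "v - 1"] by simp
    ultimately show ?thesis
      using assms by (metis diff_ge_0_iff_ge mult_nonneg_nonneg)
  qed
  then have "(v - 1) * u\<^sup>2 * u ^ j \<le> (u - 1) * v\<^sup>2 * u ^ j"
    using assms by (intro mult_right_mono) auto
  also have "\<dots> \<le> (u - 1) * v\<^sup>2 * v ^ j"
    using assms by (intro mult_left_mono power_mono) auto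
  finally have "(v - 1) * u ^ Suc k \<le> (u - 1) * v ^ Suc k"
    unfolding k by (simp add: power_add power2_eq_square ac_simps)
  then show ?thesis
    using assms by (simp add: divide_simps)
qed

definition inverse_power_gap :: "nat \<Rightarrow> real \<Rightarrow> real" where
  "inverse_power_gap k x = 1 / x ^ (2 * k) - 1 / x ^ (2 * k + 2)"

lemma inverse_power_gap_eq:
  assumes "x \<noteq> 0"
  shows "inverse_power_gap k x = (x\<^sup>2 - 1) / (x\<^sup>2) ^ Suc k"
proof -
  have "x ^ (2 * k) = (x\<^sup>2) ^ k" "x ^ (2 * k + 2) = (x\<^sup>2) ^ Suc k"
    by (simp_all add: power_mult power2_eq_square)
  then show ?thesis
    using assms by (simp add: inverse_power_gap_def field_simps)
qed

lemma inverse_power_gap_nonneg: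
  assumes "1 \<le> x"
  shows "0 \<le> inverse_power_gap k x"
proof -
  have "1 \<le> x\<^sup>2"
    using assms by (simp add: one_le_power)
  then show ?thesis
    using assms by (simp add: inverse_power_gap_eq)
qed

lemma inverse_power_gap_antimono:
  assumes "k \<ge> 1" "2 \<le> x" "x \<le> y"
  shows "inverse_power_gap k y \<le> inverse_power_gap k x"
proof -
  have "2 \<le> x\<^sup>2" "x\<^sup>2 \<le> y\<^sup>2"
    using assms power_mono [of 2 x 2] by (auto intro: power_mono)
  then show ?thesis
    using assms power_ratio_antimono by (simp add: inverse_power_gap_eq)
qed

lemma inverse_power_gap_tendsto_zero:
  assumes "k \<ge> 1"
  shows "(\<lambda>n. inverse_power_gap k (real (n + 2))) \<longlonglongrightarrow> 0"
proof -
  have "(\<lambda>n. 1 / real (n + 2) ^ m) \<longlonglongrightarrow> 0" if "m \<ge> 2" for m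
    using LIMSEQ_Suc [OF summable_LIMSEQ_zero [OF sums_summable [OF zeta_nat_sums [OF that]]]]
    by simp
  from tendsto_diff [OF this this, of "2 * k" "2 * k + 2"] show ?thesis
    using assms unfolding inverse_power_gap_def by simp
qed

lemma a_seq_diff_sums:
  assumes "k \<ge> 1"
  shows "(\<lambda>n. (-1) ^ n * inverse_power_gap k (real (n + 2))) sums (a_seq (Suc k) - a_seq k)"
proof -
  define g where "g n = (-1) ^ n / real (Suc n) ^ (2 * Suc k) - (-1) ^ n / real (Suc n) ^ (2 * k)" for n
  have "g sums (a_seq (Suc k) - a_seq k)"
    unfolding g_def using assms by (intro sums_diff a_seq_alternating_sums) auto
  moreover have "g 0 = 0"
    by (simp add: g_def)
  moreover have "g (Suc n) = (-1) ^ n * inverse_power_gap k (real (n + 2))" for n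
    by (simp add: g_def inverse_power_gap_def algebra_simps)
  ultimately show ?thesis
    using sums_Suc_iff [of g] by simp
qed

lemma a_seq_diff_bounds:
  assumes "k \<ge> 1"
  shows "0 \<le> a_seq (Suc k) - a_seq k" "a_seq (Suc k) - a_seq k \<le> 3 / 4 ^ Suc k"
proof -
  define b where "b n = inverse_power_gap k (real (n + 2))" for n
  have "b \<longlonglongrightarrow> 0" "\<And>n. 0 \<le> b n" "\<And>n. b (Suc n) \<le> b n"
    using inverse_power_gap_tendsto_zero inverse_power_gap_nonneg inverse_power_gap_antimono assms
    by (simp_all add: b_def [abs_def])
  note leibniz = summable_Leibniz' [OF this]
  have "a_seq (Suc k) - a_seq k = (\<Sum>n. (-1) ^ n * b n)"
    using a_seq_diff_sums [OF assms] by (simp add: b_def sums_iff)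
  moreover have "b 0 = 3 / 4 ^ Suc k"
    by (simp add: b_def inverse_power_gap_def power_mult)
  ultimately show "0 \<le> a_seq (Suc k) - a_seq k" "a_seq (Suc k) - a_seq k \<le> 3 / 4 ^ Suc k"
    using leibniz(2) [of 0] leibniz(4) [of 0] by simp_all
qed

lemma power_le_fact_mult_exp:
  fixes x :: real
  assumes "x \<ge> 0"
  shows "x ^ r \<le> fact r * exp x"
proof -
  have exp_sums: "(\<lambda>n. x ^ n / fact n) sums exp x"
    using exp_converges [of x] by (simp add: divide_simps)
  have "x ^ r / fact r \<le> exp x"
    using sum_le_suminf [OF sums_summable [OF exp_sums], of "{r}"] exp_sums assms
    by (auto simp: sums_iff)
  then show ?thesis
    by (simp add: divide_simps mult.commute)
qed

lemma suminf_le_geometric_bound: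
  fixes f :: "nat \<Rightarrow> real"
  assumes "\<And>i. 0 \<le> f i" "\<And>i. f i \<le> C * q ^ i" "0 \<le> q" "q < 1"
  shows "summable f" "suminf f \<le> C / (1 - q)"
proof -
  have geometric: "(\<lambda>i. C * q ^ i) sums (C / (1 - q))"
    using sums_mult [OF geometric_sums, of q C] assms by simp
  show "summable f"
    using assms by (intro summable_comparison_test [OF _ sums_summable [OF geometric]]) auto
  then show "suminf f \<le> C / (1 - q)"
    using assms sums_le [OF _ summable_sums geometric] by blast
qed

theorem lemma4p4:
  fixes r :: nat
  shows "summable (\<lambda>i. (a_seq (Suc i + 1) - a_seq (Suc i)) * real (Suc i) ^ r)
    \<and> (\<Sum>i. (a_seq (Suc i + 1) - a_seq (Suc i)) * real (Suc i) ^ r) \<le> 2 * fact r"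
proof -
  define q :: real where "q = exp 1 / 4"
  have q: "0 \<le> q" "q < 68 / 100"
    unfolding q_def using e_less_272 by auto
  define f where "f i = (a_seq (Suc i + 1) - a_seq (Suc i)) * real (Suc i) ^ r" for i
  have "f i \<le> (3 / 4 * fact r * q) * q ^ i" for i
  proof -
    have "f i \<le> 3 / 4 ^ Suc (Suc i) * (fact r * exp 1 ^ Suc i)"
      unfolding f_def using a_seq_diff_bounds [of "Suc i"]
        power_le_fact_mult_exp [of "real (Suc i)" r] exp_of_nat_mult [of "Suc i" "1 :: real"]
      by (intro mult_mono) auto
    also have "\<dots> = (3 / 4 * fact r * q) * q ^ i"
      by (simp add: q_def power_divide)
    finally show ?thesis .
  qed
  moreover have "0 \<le> f i" for i
    unfolding f_def using a_seq_diff_bounds [of "Suc i"] by simp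
  moreover have "3 / 4 * fact r * q / (1 - q) \<le> 2 * fact r"
    using q by (simp add: field_simps)
  ultimately show ?thesis
    using suminf_le_geometric_bound [of f "3 / 4 * fact r * q" q] q
    by (auto simp: f_def [abs_def])
qed

end
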